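(* For positive integers $n, m$ with $m \le n$ define $$f(n,m) = \sum_{k=0}^{m-1} \binom{n}{k} \left(\frac{m}{n}\right)^k \left(1 - \frac{m}{n}\right)^{n-k}.$$ Then $f(n,m) \geq \frac{3}{8}$ for all integers $n \geq 100$ and $12 \leq m \leq \frac{n}{2} + 1$.
   Context: $f(n,m)$ is the probability that a binomial random variable with $n$ trials and success probability $m/n$ is at most $m-1$. *)

theory Defs
  imports Complex_Main
begin

definition f :: "nat \<Rightarrow> nat \<Rightarrow> real" where
  "f n m = (\<Sum>k<m. real (n choose k) * (real m / real n) ^ k * (1 - real m / real n) ^ (n - k))"

end

theory Submission
  imports Defs
begin

text \<open>
  Let \<open>X\<close> be binomial with mean \<open>m\<close> and compare the two tails \<open>x j = P(X = m - j)\<close> and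
  \<open>y j = P(X = m + j)\<close>. They start at the same value, satisfy mirror-image one-step recurrences
  (\<open>n - X\<close> is binomial with mean \<open>n - m\<close>), and have equal first moments because \<open>E X = m\<close>.
  If \<open>m \<le> n - m\<close>, comparing the one-step ratios shows that \<open>y - x\<close> changes sign only once,
  from negative to positive; together with the equal moments this gives \<open>\<Sum> y \<le> \<Sum> x = f n m\<close>,
  hence \<open>1 \<le> 2 f n m + P(X = m)\<close>. If \<open>m > n - m\<close>, the ratios give \<open>y (j + 1) \<le> x j\<close>
  and hence \<open>1 \<le> 2 f n m + 2 P(X = m)\<close>. Finally, if \<open>K \<le> min m (n - m)\<close> then the ratio
  \<open>x (j + 1) / x j\<close> is at least \<open>(K - j) / (K + j + 1)\<close>, so the first few terms of the lower
  tail already make \<open>P(X = m)\<close> small compared with \<open>f n m\<close> (\<open>K = 12\<close>, resp. \<open>K = 49\<close>).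
\<close>

definition binomial_weight :: "nat \<Rightarrow> real \<Rightarrow> nat \<Rightarrow> real" where
  "binomial_weight n p k = real (n choose k) * p ^ k * (1 - p) ^ (n - k)"

lemma f_eq_sum_binomial_weight: "f n m = (\<Sum>k<m. binomial_weight n (real m / real n) k)"
  unfolding f_def binomial_weight_def ..

lemma binomial_weight_nonneg: "0 \<le> p \<Longrightarrow> p \<le> 1 \<Longrightarrow> 0 \<le> binomial_weight n p k"
  unfolding binomial_weight_def by simp

lemma binomial_weight_eq_0: "n < k \<Longrightarrow> binomial_weight n p k = 0"
  unfolding binomial_weight_def by simp

lemma sum_binomial_weight: "(\<Sum>k\<le>n. binomial_weight n p k) = 1"
  using binomial_ring[of p "1 - p" n] unfolding binomial_weight_def by (simp add: ac_simps)

lemma binomial_weight_Suc: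
  "binomial_weight n p (Suc k) * real (Suc k) * (1 - p) = binomial_weight n p k * real (n - k) * p"
proof (cases "k < n")
  case True
  have choose: "real (Suc k) * real (n choose Suc k) = real (n - k) * real (n choose k)"
    using binomial_absorption[of k n] binomial_absorb_comp[of n k] by (metis of_nat_mult)
  have power: "(1 - p) ^ (n - Suc k) * (1 - p) = (1 - p) ^ (n - k)"
    using True by (metis Suc_diff_Suc power_Suc2)
  have "binomial_weight n p (Suc k) * real (Suc k) * (1 - p)
      = (real (Suc k) * real (n choose Suc k)) * p ^ k * p * ((1 - p) ^ (n - Suc k) * (1 - p))"
    unfolding binomial_weight_def by (simp add: ac_simps)
  also have "\<dots> = binomial_weight n p k * real (n - k) * p"
    unfolding choose power unfolding binomial_weight_def by (simp add: ac_simps)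
  finally show ?thesis .
qed (simp add: binomial_weight_def)

lemma binomial_weight_partial_mean:
  assumes "j \<le> n"
  shows "(\<Sum>k\<le>j. (real n * p - real k) * binomial_weight n p k)
           = real (n - j) * p * binomial_weight n p j"
  using assms
proof (induction j)
  case 0
  then show ?case by (simp add: binomial_weight_def)
next
  case (Suc j)
  have "(\<Sum>k\<le>Suc j. (real n * p - real k) * binomial_weight n p k)
      = binomial_weight n p (Suc j) * (real (Suc j) * (1 - p) + (real n * p - real (Suc j)))"
    using Suc binomial_weight_Suc[of n p j] by (simp add: algebra_simps)
  also have "\<dots> = real (n - Suc j) * p * binomial_weight n p (Suc j)"
    using Suc.prems by (simp add: of_nat_diff algebra_simps)
  finally show ?case .
qed

lemma binomial_weight_mean: "(\<Sum>k\<le>n. (real n * p - real k) * binomial_weight n p k) = 0"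
  using binomial_weight_partial_mean[of n n p] by simp

lemma sum_lessThan_reflect:
  fixes g :: "nat \<Rightarrow> 'a::comm_monoid_add" and m n :: nat
  assumes "m \<le> n"
  shows "(\<Sum>k<m. g k) = (\<Sum>j\<in>{1..n}. if j \<le> m then g (m - j) else 0)"
proof -
  have "(\<Sum>k<m. g k) = (\<Sum>j\<in>{1..m}. g (m - j))"
    by (rule sum.reindex_bij_witness[of _ "\<lambda>k. m - k" "\<lambda>k. m - k"]) auto
  also have "\<dots> = (\<Sum>j\<in>{1..n}. if j \<le> m then g (m - j) else 0)"
    using assms by (intro sum.mono_neutral_cong_left) auto
  finally show ?thesis .
qed

lemma sum_atMost_split_at:
  fixes g :: "nat \<Rightarrow> 'a::comm_monoid_add" and m n :: nat
  assumes "m \<le> n" and "\<And>k. n < k \<Longrightarrow> g k = 0"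
  shows "(\<Sum>k\<le>n. g k) = (\<Sum>k<m. g k) + g m + (\<Sum>j\<in>{1..n}. g (m + j))"
proof -
  have "(\<Sum>j\<in>{1..n}. g (m + j)) = (\<Sum>k\<in>{Suc m..m + n}. g k)"
    by (rule sum.reindex_bij_witness[of _ "\<lambda>k. k - m" "\<lambda>j. m + j"]) auto
  also have "\<dots> = (\<Sum>k\<in>{Suc m..n}. g k)"
    using assms by (intro sum.mono_neutral_cong_right) auto
  finally have "(\<Sum>j\<in>{1..n}. g (m + j)) = (\<Sum>k\<in>{Suc m..n}. g k)" .
  moreover have "{..n} = {..<Suc m} \<union> {Suc m..n}"
    using assms(1) by auto
  then have "(\<Sum>k\<le>n. g k) = (\<Sum>k<Suc m. g k) + (\<Sum>k\<in>{Suc m..n}. g k)"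
    by (simp add: sum.union_disjoint ivl_disj_int)
  ultimately show ?thesis by simp
qed

text \<open>
  The lower tail \<open>j \<mapsto> P(X = m - j)\<close> of a binomial \<open>X\<close> with mean \<open>m\<close> satisfies this
  recurrence with \<open>M = m\<close>, \<open>N = n - m\<close>; the upper tail \<open>j \<mapsto> P(X = m + j)\<close> satisfies it with
  \<open>M\<close> and \<open>N\<close> exchanged.
\<close>
definition tail_recurrence :: "real \<Rightarrow> real \<Rightarrow> (nat \<Rightarrow> real) \<Rightarrow> bool" where
  "tail_recurrence M N z \<longleftrightarrow>
     (\<forall>j. z (Suc j) * ((N + real j + 1) * M) = z j * ((M - real j) * N))"

definition weight_below_mean :: "nat \<Rightarrow> nat \<Rightarrow> nat \<Rightarrow> real" where
  "weight_below_mean n m j = (if j \<le> m then binomial_weight n (real m / real n) (m - j) else 0)"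

definition weight_above_mean :: "nat \<Rightarrow> nat \<Rightarrow> nat \<Rightarrow> real" where
  "weight_above_mean n m j = binomial_weight n (real m / real n) (m + j)"

lemma weight_below_mean_0_eq_weight_above_mean_0: "weight_below_mean n m 0 = weight_above_mean n m 0"
  by (simp add: weight_below_mean_def weight_above_mean_def)

context
  fixes n m :: nat
  assumes n_pos: "0 < n" and m_le_n: "m \<le> n"
begin

private lemma binomial_weight_Suc_at_mean:
  "binomial_weight n (real m / real n) (Suc k) * real (Suc k) * real (n - m)
     = binomial_weight n (real m / real n) k * real (n - k) * real m"
proof -
  have "binomial_weight n (real m / real n) (Suc k) * real (Suc k) * real (n - m) / real n
     = binomial_weight n (real m / real n) k * real (n - k) * real m / real n"
    using binomial_weight_Suc[of n "real m / real n" k] n_pos m_le_n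
    by (simp add: of_nat_diff field_simps)
  then show ?thesis
    using n_pos by (simp add: divide_cancel_right)
qed

lemma weight_below_mean_nonneg: "0 \<le> weight_below_mean n m j"
  using n_pos m_le_n by (simp add: weight_below_mean_def binomial_weight_nonneg)

lemma weight_above_mean_nonneg: "0 \<le> weight_above_mean n m j"
  using n_pos m_le_n by (simp add: weight_above_mean_def binomial_weight_nonneg)

lemma tail_recurrence_weight_below_mean:
  "tail_recurrence (real m) (real (n - m)) (weight_below_mean n m)"
  unfolding tail_recurrence_def
proof
  fix j
  show "weight_below_mean n m (Suc j) * ((real (n - m) + real j + 1) * real m)
      = weight_below_mean n m j * ((real m - real j) * real (n - m))"
  proof (cases "j < m")
    case True
    have "Suc (m - Suc j) = m - j" "real (n - (m - Suc j)) = real (n - m) + real j + 1"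
      "real (m - j) = real m - real j"
      using True m_le_n by auto
    with binomial_weight_Suc_at_mean[of "m - Suc j"] show ?thesis
      using True by (simp add: weight_below_mean_def Suc_le_eq ac_simps)
  qed (auto simp: weight_below_mean_def)
qed

lemma tail_recurrence_weight_above_mean:
  "tail_recurrence (real (n - m)) (real m) (weight_above_mean n m)"
  unfolding tail_recurrence_def
proof
  fix j
  show "weight_above_mean n m (Suc j) * ((real m + real j + 1) * real (n - m))
      = weight_above_mean n m j * ((real (n - m) - real j) * real m)"
  proof (cases "m + j \<le> n")
    case True
    then have "real (n - (m + j)) = real (n - m) - real j"
      by simp
    with binomial_weight_Suc_at_mean[of "m + j"] show ?thesis
      by (simp add: weight_above_mean_def ac_simps)
  qed (simp add: weight_above_mean_def binomial_weight_eq_0)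
qed

lemma f_eq_sum_weight_below_mean: "f n m = (\<Sum>j\<in>{1..n}. weight_below_mean n m j)"
  unfolding f_eq_sum_binomial_weight weight_below_mean_def by (rule sum_lessThan_reflect[OF m_le_n])

lemma sum_weights_around_mean:
  "f n m + weight_below_mean n m 0 + (\<Sum>j\<in>{1..n}. weight_above_mean n m j) = 1"
  using sum_atMost_split_at[OF m_le_n, of "binomial_weight n (real m / real n)"]
  by (simp add: sum_binomial_weight binomial_weight_eq_0 f_eq_sum_binomial_weight
      weight_below_mean_def weight_above_mean_def)

lemma first_moments_around_mean_eq:
  "(\<Sum>j\<in>{1..n}. real j * weight_below_mean n m j) = (\<Sum>j\<in>{1..n}. real j * weight_above_mean n m j)"
proof -
  define g where "g k = (real m - real k) * binomial_weight n (real m / real n) k" for k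
  have "(\<Sum>k\<le>n. g k) = 0"
    using binomial_weight_mean[of n "real m / real n"] n_pos unfolding g_def by simp
  moreover have "(\<Sum>k<m. g k) = (\<Sum>j\<in>{1..n}. real j * weight_below_mean n m j)"
    unfolding sum_lessThan_reflect[OF m_le_n] g_def weight_below_mean_def
    by (intro sum.cong) auto
  moreover have "(\<Sum>j\<in>{1..n}. g (m + j)) = - (\<Sum>j\<in>{1..n}. real j * weight_above_mean n m j)"
    unfolding g_def weight_above_mean_def sum_negf[symmetric] by (intro sum.cong) auto
  ultimately show ?thesis
    using sum_atMost_split_at[OF m_le_n, of g] by (simp add: g_def binomial_weight_eq_0)
qed

end

lemma le_of_cross_multiplied_ratios:
  fixes a a' b b' D D' E E' :: real
  assumes "a' * D = a * E" "b' * D' = b * E'" "0 < D" "0 < D'"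
    and "0 \<le> a" "a \<le> b" "0 \<le> b'" "E * D' \<le> E' * D"
  shows "a' \<le> b'"
proof (cases "0 \<le> E'")
  case True
  have "a' * (D * D') = a * (E * D')" using assms(1) by (simp add: ac_simps)
  also have "\<dots> \<le> a * (E' * D)" using assms(5,8) by (simp add: mult_left_mono)
  also have "\<dots> \<le> b * (E' * D)" using assms(3,6) True by (intro mult_right_mono) auto
  also have "\<dots> = b' * (D * D')" using assms(2) by (simp add: ac_simps)
  finally show ?thesis using assms(3,4) by simp
next
  case False
  then have "E * D' < 0"
    using assms(3,8) mult_neg_pos[of E' D] by linarith
  then have "E < 0"
    using assms(4) by (simp add: mult_less_0_iff)
  then have "a' * D \<le> 0"
    using assms(1,5) by (simp add: mult_nonneg_nonpos)
  then show ?thesis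
    using assms(3,7) by (simp add: mult_le_0_iff)
qed

lemma tail_recurrence_Suc_le:
  assumes a: "tail_recurrence M N a" and b: "tail_recurrence M' N' b"
    and "0 < M" "0 \<le> N" "0 < M'" "0 \<le> N'"
    and "0 \<le> a i" "a i \<le> b j" "0 \<le> b (Suc j)"
    and "(M - real i) * N * ((N' + real j + 1) * M') \<le> (M' - real j) * N' * ((N + real i + 1) * M)"
  shows "a (Suc i) \<le> b (Suc j)"
proof (rule le_of_cross_multiplied_ratios[where E = "(M - real i) * N" and D = "(N + real i + 1) * M"
      and E' = "(M' - real j) * N'" and D' = "(N' + real j + 1) * M'"])
  show "a (Suc i) * ((N + real i + 1) * M) = a i * ((M - real i) * N)"
    using a unfolding tail_recurrence_def by blast
  show "b (Suc j) * ((N' + real j + 1) * M') = b j * ((M' - real j) * N')"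
    using b unfolding tail_recurrence_def by blast
qed (use assms(3-) in \<open>auto simp: add_nonneg_pos\<close>)

lemma tail_recurrence_ratio_lower_bound:
  assumes "tail_recurrence M N z" "0 \<le> z j" "0 < K" "K \<le> M" "K \<le> N" "real j \<le> K"
  shows "(K - real j) / (K + real j + 1) * z j \<le> z (Suc j)"
proof -
  have left: "(K - real j) * M \<le> (M - real j) * K"
    using mult_right_mono[OF assms(4), of "real j"] by (simp add: algebra_simps)
  have right: "K * (N + real j + 1) \<le> N * (K + real j + 1)"
    using mult_right_mono[OF assms(5), of "real j + 1"] by (simp add: algebra_simps)
  have "(K - real j) * M * (K * (N + real j + 1)) \<le> (M - real j) * K * (N * (K + real j + 1))"
    using assms(3-6) by (intro mult_mono[OF left right]) auto
  then have "(K - real j) * ((N + real j + 1) * M) \<le> (M - real j) * N * (K + real j + 1)"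
    using assms(3) by (simp add: ac_simps)
  then have ratio: "(K - real j) / (K + real j + 1) * ((N + real j + 1) * M) \<le> (M - real j) * N"
    using assms(3) by (simp add: field_simps)
  have "(K - real j) / (K + real j + 1) * z j * ((N + real j + 1) * M)
      = z j * ((K - real j) / (K + real j + 1) * ((N + real j + 1) * M))"
    by (simp add: ac_simps)
  also have "\<dots> \<le> z j * ((M - real j) * N)"
    using ratio assms(2) by (rule mult_left_mono)
  also have "\<dots> = z (Suc j) * ((N + real j + 1) * M)"
    using assms(1) unfolding tail_recurrence_def by simp
  finally have "(K - real j) / (K + real j + 1) * z j * ((N + real j + 1) * M)
      \<le> z (Suc j) * ((N + real j + 1) * M)" .
  moreover have "0 < (N + real j + 1) * M"
    using assms(3-5) by simp
  ultimately show ?thesis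
    by (rule mult_right_le_imp_le)
qed

lemma tail_recurrence_sum_lower_bound:
  assumes z: "tail_recurrence M N z" and z_nonneg: "\<And>i. 0 \<le> z i"
    and K: "0 < K" "K \<le> M" "K \<le> N" and r: "real r \<le> K + 1"
  shows "(\<Sum>i\<in>{1..r}. \<Prod>j<i. (K - real j) / (K + real j + 1)) * z 0 \<le> (\<Sum>i\<in>{1..r}. z i)"
proof -
  have prefix: "(\<Prod>j<i. (K - real j) / (K + real j + 1)) * z 0 \<le> z i" if "real i \<le> K + 1" for i
    using that
  proof (induction i)
    case 0
    show ?case by simp
  next
    case (Suc i)
    have "(\<Prod>j<Suc i. (K - real j) / (K + real j + 1)) * z 0
        = (K - real i) / (K + real i + 1) * ((\<Prod>j<i. (K - real j) / (K + real j + 1)) * z 0)"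
      by (simp add: ac_simps)
    also have "\<dots> \<le> (K - real i) / (K + real i + 1) * z i"
      using Suc K(1) by (intro mult_left_mono) auto
    also have "\<dots> \<le> z (Suc i)"
      using Suc.prems by (intro tail_recurrence_ratio_lower_bound[OF z z_nonneg K]) auto
    finally show ?case .
  qed
  show ?thesis
    unfolding sum_distrib_right using r by (intro sum_mono prefix) auto
qed

lemma sum_le_of_single_crossing:
  fixes x y :: "nat \<Rightarrow> real"
  assumes x0: "x 0 = y 0"
    and P_downward_closed: "\<And>i j. i \<le> j \<Longrightarrow> P j \<Longrightarrow> P i"
    and stay_below: "\<And>j. P j \<Longrightarrow> y j \<le> x j \<Longrightarrow> y (Suc j) \<le> x (Suc j)"
    and stay_above: "\<And>j. \<not> P j \<Longrightarrow> x j \<le> y j \<Longrightarrow> x (Suc j) \<le> y (Suc j)"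
    and moments: "(\<Sum>j\<in>{1..L}. real j * x j) = (\<Sum>j\<in>{1..L}. real j * y j)"
  shows "(\<Sum>j\<in>{1..L}. y j) \<le> (\<Sum>j\<in>{1..L}. x j)"
proof (cases "\<forall>j. y j \<le> x j")
  case True
  then show ?thesis by (intro sum_mono) auto
next
  case False
  define K where "K = (LEAST j. x j < y j)"
  have xK: "x K < y K"
    using False unfolding K_def not_all not_le by (rule LeastI_ex)
  have below: "y j \<le> x j" if "j < K" for j
    using not_less_Least[of j "\<lambda>j. x j < y j"] that unfolding K_def by auto
  have K_pos: "0 < K"
    using xK x0 by (cases K) auto
  have crossed: "\<not> P (K - 1)"
  proof
    assume "P (K - 1)"
    then have "y (Suc (K - 1)) \<le> x (Suc (K - 1))"
      using stay_below below[of "K - 1"] K_pos by (metis diff_less zero_less_one)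
    with K_pos xK show False by simp
  qed
  have above: "x j \<le> y j" if "K \<le> j" for j
    using that
  proof (induction j rule: dec_induct)
    case base
    show ?case using xK by simp
  next
    case (step j)
    have "K - 1 \<le> j"
      using step.hyps(1) by arith
    then have "\<not> P j"
      using crossed P_downward_closed by blast
    then show ?case
      using stay_above step.IH by blast
  qed
  \<comment> \<open>Each term is nonnegative, and by the moment condition the \<open>j\<close>-weighted part cancels.\<close>
  have "0 \<le> (\<Sum>j\<in>{1..L}. (real K - real j) * (x j - y j))"
  proof (intro sum_nonneg)
    fix j
    show "0 \<le> (real K - real j) * (x j - y j)"
      using below[of j] above[of j] by (cases "j < K") (auto intro: mult_nonpos_nonpos)
  qed
  also have "\<dots> = real K * ((\<Sum>j\<in>{1..L}. x j) - (\<Sum>j\<in>{1..L}. y j))"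
    using moments
    by (simp add: left_diff_distrib right_diff_distrib sum_subtractf sum_distrib_left)
  finally show ?thesis
    using K_pos by (simp add: zero_le_mult_iff)
qed

lemma sum_upper_tail_le_sum_lower_tail:
  assumes x: "tail_recurrence M N x" and y: "tail_recurrence N M y"
    and "0 < M" "M \<le> N" and "\<And>j. 0 \<le> x j" "\<And>j. 0 \<le> y j" and "x 0 = y 0"
    and "(\<Sum>j\<in>{1..L}. real j * x j) = (\<Sum>j\<in>{1..L}. real j * y j)"
  shows "(\<Sum>j\<in>{1..L}. y j) \<le> (\<Sum>j\<in>{1..L}. x j)"
proof (rule sum_le_of_single_crossing[where P = "\<lambda>j. real j * (real j + 1) * (N + M) \<le> M * N"])
  \<comment> \<open>Cross-multiplied, the two one-step ratios differ by a factor whose sign changes once.\<close>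
  have ratios: "(M - real j) * N * ((M + real j + 1) * N) - (N - real j) * M * ((N + real j + 1) * M)
      = (N - M) * (M * N - real j * (real j + 1) * (N + M))" for j
    by (simp add: algebra_simps)
  show "real i * (real i + 1) * (N + M) \<le> M * N"
    if "i \<le> j" "real j * (real j + 1) * (N + M) \<le> M * N" for i j
  proof -
    have "real i * (real i + 1) \<le> real j * (real j + 1)"
      using that(1) by (intro mult_mono) auto
    then have "real i * (real i + 1) * (N + M) \<le> real j * (real j + 1) * (N + M)"
      using assms(3,4) by (intro mult_right_mono) auto
    then show ?thesis
      using that(2) by linarith
  qed
  show "y (Suc j) \<le> x (Suc j)"
    if "real j * (real j + 1) * (N + M) \<le> M * N" "y j \<le> x j" for j
  proof -
    have "0 \<le> (N - M) * (M * N - real j * (real j + 1) * (N + M))"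
      using that(1) assms(4) by (intro mult_nonneg_nonneg) auto
    then have "(N - real j) * M * ((N + real j + 1) * M) \<le> (M - real j) * N * ((M + real j + 1) * N)"
      using ratios[of j] by linarith
    then show ?thesis
      by (rule tail_recurrence_Suc_le[OF y x, rotated -1]) (use that assms(3-6) in auto)
  qed
  show "x (Suc j) \<le> y (Suc j)"
    if "\<not> real j * (real j + 1) * (N + M) \<le> M * N" "x j \<le> y j" for j
  proof -
    have "(N - M) * (M * N - real j * (real j + 1) * (N + M)) \<le> 0"
      using that(1) assms(4) by (intro mult_nonneg_nonpos) auto
    then have "(M - real j) * N * ((M + real j + 1) * N) \<le> (N - real j) * M * ((N + real j + 1) * M)"
      using ratios[of j] by linarith
    then show ?thesis
      by (rule tail_recurrence_Suc_le[OF x y, rotated -1]) (use that assms(3-6) in auto)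
  qed
qed (use assms in auto)

lemma upper_tail_Suc_le_lower_tail:
  assumes x: "tail_recurrence M N x" and y: "tail_recurrence N M y"
    and "0 < N" "N \<le> M" and "\<And>j. 0 \<le> x j" "\<And>j. 0 \<le> y j" and "x 0 = y 0"
  shows "y (Suc j) \<le> x j"
proof (induction j)
  case 0
  have "y (Suc 0) * ((M + 1) * N) = y 0 * (N * M)"
    using y[unfolded tail_recurrence_def, rule_format, of 0] by simp
  then show ?case
  proof (rule le_of_cross_multiplied_ratios[where b = "x 0" and D' = 1 and E' = 1])
    show "0 < (M + 1) * N"
      using assms(3,4) by simp
    show "N * M * 1 \<le> 1 * ((M + 1) * N)"
      using assms(3) by (simp add: algebra_simps)
  qed (use assms(5-7) in auto)
next
  case (Suc j)
  have "(N - real (Suc j)) * M * ((N + real j + 1) * M) \<le> (M - real j) * N * ((M + real (Suc j) + 1) * N)"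
  proof -
    have "(M - real j) * N * ((M + real (Suc j) + 1) * N) - (N - real (Suc j)) * M * ((N + real j + 1) * M)
        = N * N * (2 * M + 1) + (M * M - N * N) * ((real j + 1) * (real j + 1))"
      by (simp add: algebra_simps)
    moreover have "0 \<le> N * N * (2 * M + 1)"
      using assms(3,4) by simp
    moreover have "N * N \<le> M * M"
      using assms(3,4) by (intro mult_mono) auto
    then have "0 \<le> (M * M - N * N) * ((real j + 1) * (real j + 1))"
      by simp
    ultimately show ?thesis
      by linarith
  qed
  then show ?case
    by (rule tail_recurrence_Suc_le[OF y x, rotated -1]) (use Suc assms(3-6) in auto)
qed

lemma sum_le_of_shifted_domination:
  fixes x y :: "nat \<Rightarrow> real"
  assumes "\<And>j. y (Suc j) \<le> x j" and "\<And>j. 0 \<le> x j"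
  shows "(\<Sum>j\<in>{1..n}. y j) \<le> x 0 + (\<Sum>j\<in>{1..n}. x j)"
proof -
  have "(\<Sum>j\<in>{1..n}. y j) = (\<Sum>j<n. y (Suc j))"
    by (rule sum.reindex_bij_witness[of _ Suc "\<lambda>j. j - 1"]) auto
  also have "\<dots> \<le> (\<Sum>j<n. x j)"
    using assms(1) by (rule sum_mono)
  also have "\<dots> \<le> (\<Sum>j\<le>n. x j)"
    using assms(2) by (intro sum_mono2) auto
  also have "\<dots> = x 0 + (\<Sum>j\<in>{1..n}. x j)"
    by (simp add: atMost_atLeast0 sum.atLeast_Suc_atMost)
  finally show ?thesis .
qed

lemma f_lower_bound_by_weight_at_mean:
  assumes "0 < n" "m \<le> n" "0 < K" "K \<le> real m" "K \<le> real (n - m)" "real r \<le> K + 1" "r \<le> n"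
  shows "(\<Sum>i\<in>{1..r}. \<Prod>j<i. (K - real j) / (K + real j + 1)) * weight_below_mean n m 0 \<le> f n m"
proof -
  have "(\<Sum>i\<in>{1..r}. \<Prod>j<i. (K - real j) / (K + real j + 1)) * weight_below_mean n m 0
      \<le> (\<Sum>i\<in>{1..r}. weight_below_mean n m i)"
    by (rule tail_recurrence_sum_lower_bound[OF tail_recurrence_weight_below_mean
          weight_below_mean_nonneg]) (use assms in auto)
  also have "\<dots> \<le> f n m"
    using assms unfolding f_eq_sum_weight_below_mean[OF assms(1,2)]
    by (intro sum_mono2 weight_below_mean_nonneg) auto
  finally show ?thesis .
qed

lemma f_lower_bound_if_mean_le_half:
  assumes "12 \<le> m" "m \<le> n - m"
  shows "3 / 8 \<le> f n m"
proof -
  have n: "0 < n" "m \<le> n" using assms by auto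
  have "(\<Sum>j\<in>{1..n}. weight_above_mean n m j) \<le> f n m"
    unfolding f_eq_sum_weight_below_mean[OF n]
    by (rule sum_upper_tail_le_sum_lower_tail[OF tail_recurrence_weight_below_mean[OF n]
          tail_recurrence_weight_above_mean[OF n] _ _ weight_below_mean_nonneg[OF n]
          weight_above_mean_nonneg[OF n] weight_below_mean_0_eq_weight_above_mean_0 first_moments_around_mean_eq[OF n]])
      (use assms in auto)
  \<comment> \<open>\<open>150 / 91 = 12 / 13 + (12 / 13) * (11 / 14)\<close>\<close>
  moreover have "150 / 91 * weight_below_mean n m 0 \<le> f n m"
    using f_lower_bound_by_weight_at_mean[OF n, of 12 2] assms n
    by (simp add: numeral_eq_Suc lessThan_Suc atLeastAtMostSuc_conv)
  ultimately show ?thesis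
    using sum_weights_around_mean[OF n] by linarith
qed

lemma f_lower_bound_if_mean_gt_half:
  assumes "n - m < m" "49 \<le> n - m"
  shows "3 / 8 \<le> f n m"
proof -
  have n: "0 < n" "m \<le> n" using assms by auto
  have "weight_above_mean n m (Suc j) \<le> weight_below_mean n m j" for j
    by (rule upper_tail_Suc_le_lower_tail[OF tail_recurrence_weight_below_mean[OF n]
          tail_recurrence_weight_above_mean[OF n] _ _ weight_below_mean_nonneg[OF n]
          weight_above_mean_nonneg[OF n] weight_below_mean_0_eq_weight_above_mean_0])
      (use assms in auto)
  then have "(\<Sum>j\<in>{1..n}. weight_above_mean n m j) \<le> weight_below_mean n m 0 + f n m"
    unfolding f_eq_sum_weight_below_mean[OF n]
    by (rule sum_le_of_shifted_domination) (use weight_below_mean_nonneg[OF n] in auto)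
  moreover have "3 * weight_below_mean n m 0 \<le> f n m"
  proof -
    have "3 * weight_below_mean n m 0
        \<le> (\<Sum>i\<in>{1..4}. \<Prod>j<i. (49 - real j) / (49 + real j + 1)) * weight_below_mean n m 0"
      using weight_below_mean_nonneg[OF n, of 0]
      by (intro mult_right_mono) (simp_all add: numeral_eq_Suc lessThan_Suc atLeastAtMostSuc_conv)
    also have "\<dots> \<le> f n m"
      by (rule f_lower_bound_by_weight_at_mean[OF n]) (use assms in auto)
    finally show ?thesis .
  qed
  ultimately show ?thesis
    using sum_weights_around_mean[OF n] by linarith
qed

theorem lemma3:
  fixes n m :: nat
  assumes "n \<ge> 100" and "12 \<le> m" and "real m \<le> real n / 2 + 1"
  shows "f n m \<ge> 3 / 8"
proof (cases "m \<le> n - m")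
  case True
  then show ?thesis
    using assms(2) by (rule f_lower_bound_if_mean_le_half[rotated])
next
  case False
  have "49 \<le> n - m"
    using assms(1,3) by linarith
  with False show ?thesis
    using f_lower_bound_if_mean_gt_half by simp
qed

end
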